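(* Fix $a\in(0,1/2)$, $b\in(0,1)$ and $n\in\mathbb{N}\cup\{\infty\}$. Consider the spread process with parameters $(\mathcal{P}_n,v_0,\mathcal{P}_n,a,b)$ and let $i_t$ be the index of the truth frontier after round $t$. There exist constants $K,c_1,c_2,c_3>0$ depending only on $a,b$ such that for all $t\ge1$, $$\Pr\big[i_t\le\min\{bt+Kt^{1-c_3},\,n\}\big]\ge1-e^{-c_1t^{c_2}}.$$
   Context: Spread process. Fix $a,b\in[0,1]$. Let $G=(V,E)$ be a connected, locally finite, undirected graph, $r\in V$ a root, and $T$ a BFS spanning tree of $G$ rooted at $r$, oriented away from $r$, with parent $p(v)$ for $v\ne r$. The spread process with parameters $(G,r,T,a,b)$ is the random sequence $f_t:V\to\{+1,-1,\bot\}$: $f_t(r)=+1$ for all $t$; $f_0(v)=\bot$ for $v\ne r$; for $t\ge1$ and each $v\ne r$ independently: if $f_{t-1}(v)=\bot\ne f_{t-1}(p(v))$ then $f_t(v)=f_{t-1}(p(v))$ w.p. $1-a$ and $-f_{t-1}(p(v))$ w.p. $a$; if $f_{t-1}(v)\neq\bot$ then $f_t(v)=f_{t-1}(p(v))$ w.p. $b$ and $f_{t-1}(v)$ w.p. $1-b$; if $f_{t-1}(v)=f_{t-1}(p(v))=\bot$ then $f_t(v)=\bot$. Path: $\mathcal{P}_n$ has vertices $v_0,\dots,v_n$ (infinitely many if $n=\infty$), root $v_0$, $p(v_i)=v_{i-1}$; it is its own BFS tree. Truth frontier on the path after round $t$: the node $v_{i_t}$ with $i_t=\max\{i:0\le i\le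 n,\ f_t(v_0)=\dots=f_t(v_i)=+1\}$. *)

theory Defs
  imports "HOL-Probability.Probability" "HOL-Library.Extended_Nat"
begin

text \<open>Spin values: +1, -1 and bottom (undefined opinion).\<close>
datatype spin = Pos | Neg | Bot

fun flip :: "spin \<Rightarrow> spin" where
  "flip Pos = Neg" | "flip Neg = Pos" | "flip Bot = Bot"

text \<open>Path P_n with vertices v_0, ..., v_n (n = \<infinity> allowed), vertex v_i encoded by i,
  root v_0, parent of v_i is v_(i-1).  A configuration is a map nat \<Rightarrow> spin; indices
  i > n are not vertices and are kept at Bot.\<close>

definition local_step :: "real \<Rightarrow> real \<Rightarrow> spin \<Rightarrow> spin \<Rightarrow> spin pmf" where
  "local_step a b x p =
     (if x = Bot \<and> p \<noteq> Bot then map_pmf (\<lambda>c. if c then flip p else p) (bernoulli_pmf a)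
      else if x \<noteq> Bot then map_pmf (\<lambda>c. if c then p else x) (bernoulli_pmf b)
      else return_pmf Bot)"

text \<open>Vertices whose update is not deterministically Bot (finite for all reachable
  configurations); all other vertices stay Bot.  Independent updates via Pi_pmf.\<close>
definition active :: "enat \<Rightarrow> (nat \<Rightarrow> spin) \<Rightarrow> nat set" where
  "active n f = {i. 1 \<le> i \<and> enat i \<le> n \<and> (f i \<noteq> Bot \<or> f (i - 1) \<noteq> Bot)}"

definition spread_step :: "real \<Rightarrow> real \<Rightarrow> enat \<Rightarrow> (nat \<Rightarrow> spin) \<Rightarrow> (nat \<Rightarrow> spin) pmf" where
  "spread_step a b n f =
     map_pmf (\<lambda>g. g(0 := Pos)) (Pi_pmf (active n f) Bot (\<lambda>i. local_step a b (f i) (f (i - 1))))"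

definition init_conf :: "nat \<Rightarrow> spin" where
  "init_conf = (\<lambda>i. if i = 0 then Pos else Bot)"

fun spread_path :: "real \<Rightarrow> real \<Rightarrow> enat \<Rightarrow> nat \<Rightarrow> (nat \<Rightarrow> spin) pmf" where
  "spread_path a b n 0 = return_pmf init_conf"
| "spread_path a b n (Suc t) = bind_pmf (spread_path a b n t) (spread_step a b n)"

definition frontier :: "enat \<Rightarrow> (nat \<Rightarrow> spin) \<Rightarrow> nat" where
  "frontier n f = (GREATEST i. enat i \<le> n \<and> (\<forall>j\<le>i. f j = Pos))"

end

theory Submission
  imports Defs
begin

text \<open>
  Drive the process by independent coins: in round \<open>s\<close> every vertex \<open>i \<le> s\<close> copies its
  parent with probability \<open>b\<close>, and the new vertex \<open>s + 1\<close> is created from its parent, with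
  a flip of probability \<open>a\<close>. Tracing copies backwards, the value of vertex \<open>i\<close> after round
  \<open>s\<close> is the value with which some vertex \<open>origin s i\<close> was created; the creation values form
  a Markov chain of flips, independent of the copy coins.

  For a block start \<open>J\<close>, the leftmost vertex whose origin is at least \<open>J\<close> moves one step
  to the right whenever it copies its parent, so after round \<open>t\<close> it sits at \<open>J\<close> plus a
  Binomial\<open>(t - J, b)\<close> variable, within \<open>(1 - b) \<Delta> / 2\<close> of its mean except with
  Hoeffding-small probability. For the block starts \<open>k \<Delta>\<close>, \<open>k = 1..u\<close>, these trackers then
  lie strictly increasingly below \<open>b t + (u + 1) \<Delta>\<close>, with pairwise distinct origins. If
  the truth frontier is beyond that point, all \<open>u\<close> origins were created with value \<open>+1\<close>,
  which has probability at most \<open>(1 - a)\<^sup>u\<close> because \<open>a \<le> 1/2\<close>. Taking \<open>\<Delta> = u\<^sup>5\<close> and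
  \<open>u \<approx> t\<^sup>1\<^sup>/\<^sup>8\<close> gives the theorem with \<open>c\<^sub>2 = 1/8\<close> and \<open>c\<^sub>3 = 1/4\<close>.
\<close>

section \<open>Products of probability mass functions\<close>

lemma Pi_pmf_map_indexed:
  assumes "finite A"
  shows "Pi_pmf A d (\<lambda>x. map_pmf (h x) (p x)) =
         map_pmf (\<lambda>g x. if x \<in> A then h x (g x) else d) (Pi_pmf A d' p)"
proof -
  have "Pi_pmf A d (\<lambda>x. map_pmf (h x) (p x)) = Pi_pmf A d (\<lambda>x. bind_pmf (p x) (\<lambda>c. return_pmf (h x c)))"
    by (simp add: map_pmf_def)
  also have "\<dots> = bind_pmf (Pi_pmf A d' p) (\<lambda>f. Pi_pmf A d (\<lambda>x. return_pmf (h x (f x))))"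
    using assms by (rule Pi_pmf_bind)
  also have "\<dots> = bind_pmf (Pi_pmf A d' p) (\<lambda>f. return_pmf (\<lambda>x. if x \<in> A then h x (f x) else d))"
    using assms by simp
  finally show ?thesis by (simp add: map_pmf_def)
qed

lemma Pi_pmf_pair_pmf:
  assumes "finite A"
  shows "Pi_pmf A (d1, d2) (\<lambda>x. pair_pmf (p x) (q x)) =
         map_pmf (\<lambda>(f, g) x. (f x, g x)) (pair_pmf (Pi_pmf A d1 p) (Pi_pmf A d2 q))"
proof -
  have "Pi_pmf A (d1, d2) (\<lambda>x. pair_pmf (p x) (q x)) =
        Pi_pmf A (d1, d2) (\<lambda>x. bind_pmf (p x) (\<lambda>u. map_pmf (Pair u) (q x)))"
    by (simp add: pair_pmf_def map_pmf_def)
  also have "\<dots> = bind_pmf (Pi_pmf A d1 p) (\<lambda>f. Pi_pmf A (d1, d2) (\<lambda>x. map_pmf (Pair (f x)) (q x)))"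
    using assms by (rule Pi_pmf_bind)
  also have "\<dots> = bind_pmf (Pi_pmf A d1 p)
      (\<lambda>f. map_pmf (\<lambda>g x. if x \<in> A then (f x, g x) else (d1, d2)) (Pi_pmf A d2 q))"
    using assms by (simp add: Pi_pmf_map_indexed[where d'=d2])
  also have "\<dots> = map_pmf (\<lambda>(f, g) x. if x \<in> A then (f x, g x) else (d1, d2))
                    (pair_pmf (Pi_pmf A d1 p) (Pi_pmf A d2 q))"
    by (simp add: pair_pmf_def map_pmf_def bind_assoc_pmf bind_return_pmf)
  also have "\<dots> = map_pmf (\<lambda>(f, g) x. (f x, g x)) (pair_pmf (Pi_pmf A d1 p) (Pi_pmf A d2 q))"
    using set_Pi_pmf_subset[OF assms, of d1 p] set_Pi_pmf_subset[OF assms, of d2 q]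
    by (intro map_pmf_cong refl) (fastforce simp: fun_eq_iff)
  finally show ?thesis .
qed

lemma measure_pair_pmf_Times:
  "measure_pmf.prob (pair_pmf M N) (A \<times> B) = measure_pmf.prob M A * measure_pmf.prob N B"
proof -
  have "(A \<times> B) \<inter> set_pmf (pair_pmf M N) = (A \<inter> set_pmf M) \<times> (B \<inter> set_pmf N)"
    by auto
  then have "measure_pmf.prob (pair_pmf M N) (A \<times> B)
      = measure_pmf.prob M (A \<inter> set_pmf M) * measure_pmf.prob N (B \<inter> set_pmf N)"
    by (metis measure_Int_set_pmf measure_pmf_prob_product countable_set_pmf countable_Int2)
  then show ?thesis by (simp add: measure_Int_set_pmf)
qed

lemma measure_pair_pmf_le:
  assumes "\<And>y. y \<in> set_pmf N \<Longrightarrow> measure_pmf.prob M {x. (x, y) \<in> X} \<le> c" and "0 \<le> c"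
  shows "measure_pmf.prob (pair_pmf M N) X \<le> c"
proof -
  have "pair_pmf M N = bind_pmf N (\<lambda>y. map_pmf (\<lambda>x. (x, y)) M)"
    unfolding pair_pmf_def map_pmf_def by (subst bind_commute_pmf) simp
  then have "emeasure (measure_pmf (pair_pmf M N)) X
      = (\<integral>\<^sup>+y. emeasure (measure_pmf (map_pmf (\<lambda>x. (x, y)) M)) X \<partial>N)"
    by simp
  also have "\<dots> \<le> (\<integral>\<^sup>+y. ennreal c \<partial>N)"
    using assms(1)
    by (intro nn_integral_mono_AE AE_pmfI)
       (simp add: measure_pmf.emeasure_eq_measure ennreal_leI vimage_def)
  also have "\<dots> = ennreal c" by simp
  finally show ?thesis
    using assms(2) by (simp add: measure_pmf.emeasure_eq_measure)
qed

section \<open>The coupled process\<close>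

lemma enat_diff_le: "enat i \<le> n \<Longrightarrow> enat (i - k) \<le> n"
  by (meson diff_le_self enat_ord_simps(1) order_trans)

lemma flip_eq_Bot_iff [simp]: "flip x = Bot \<longleftrightarrow> x = Bot"
  by (cases x) auto

lemma flip_eq_Pos_iff [simp]: "flip x = Pos \<longleftrightarrow> x = Neg"
  by (cases x) auto

definition coupled_step :: "enat \<Rightarrow> nat \<Rightarrow> (nat \<Rightarrow> spin) \<Rightarrow> (nat \<Rightarrow> bool) \<Rightarrow> nat \<Rightarrow> spin" where
  "coupled_step n s f c i = (if i = 0 then Pos
     else if enat i \<le> n \<and> i \<le> s then (if c i then f (i - 1) else f i)
     else if enat i \<le> n \<and> i = Suc s then (if c i then flip (f s) else f s)
     else Bot)"

fun coupled_run :: "enat \<Rightarrow> (nat \<Rightarrow> nat \<Rightarrow> bool) \<Rightarrow> nat \<Rightarrow> nat \<Rightarrow> spin" where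
  "coupled_run n \<omega> 0 = init_conf"
| "coupled_run n \<omega> (Suc s) = coupled_step n s (coupled_run n \<omega> s) (\<omega> s)"

lemma coupled_run_support:
  "coupled_run n \<omega> s 0 = Pos \<and> (\<forall>i. coupled_run n \<omega> s i \<noteq> Bot \<longleftrightarrow> i \<le> s \<and> enat i \<le> n)"
proof (induction s)
  case 0
  have "enat 0 \<le> n" by (simp flip: zero_enat_def)
  then show ?case by (auto simp: init_conf_def)
next
  case (Suc s)
  have "enat s \<le> n" if "enat (Suc s) \<le> n"
    using that enat_diff_le[of "Suc s" n 1] by simp
  then show ?case using Suc enat_diff_le[of _ n 1]
    by (auto simp: coupled_step_def split: if_splits)
qed

lemma coupled_run_cong:
  "(\<And>s'. s' < s \<Longrightarrow> \<omega> s' = \<omega>' s') \<Longrightarrow> coupled_run n \<omega> s = coupled_run n \<omega>' s"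
  by (induction s) auto

fun flip_chain :: "(nat \<Rightarrow> bool) \<Rightarrow> nat \<Rightarrow> spin" where
  "flip_chain F 0 = Pos"
| "flip_chain F (Suc j) = (if F j then flip (flip_chain F j) else flip_chain F j)"

lemma flip_chain_cong: "(\<And>i. i < j \<Longrightarrow> F i = F' i) \<Longrightarrow> flip_chain F j = flip_chain F' j"
  by (induction j) auto

text \<open>The coin of vertex \<open>j + 1\<close> in round \<open>j\<close> is the flip coin of its creation.\<close>
definition created_value :: "(nat \<Rightarrow> nat \<Rightarrow> bool) \<Rightarrow> nat \<Rightarrow> spin" where
  "created_value \<omega> = flip_chain (\<lambda>j. \<omega> j (Suc j))"

text \<open>The vertex whose creation value \<open>i\<close> holds after round \<open>s\<close>: a successful copy coin of
  \<open>i\<close> in round \<open>s\<close> passes the question on to \<open>i - 1\<close>.\<close>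
fun origin :: "(nat \<Rightarrow> nat \<Rightarrow> bool) \<Rightarrow> nat \<Rightarrow> nat \<Rightarrow> nat" where
  "origin \<omega> 0 i = i"
| "origin \<omega> (Suc s) i = (if 1 \<le> i \<and> i \<le> s \<and> \<omega> s i then origin \<omega> s (i - 1) else origin \<omega> s i)"

lemma origin_eq_self: "s \<le> i \<Longrightarrow> origin \<omega> s i = i"
  by (induction s) auto

lemma origin_le: "origin \<omega> s i \<le> i"
proof (induction s arbitrary: i)
  case (Suc s)
  show ?case using Suc.IH[of i] Suc.IH[of "i - 1"] by auto
qed simp

lemma origin_le_origin_Suc: "origin \<omega> s i \<le> origin \<omega> s (Suc i)"
proof (induction s arbitrary: i)
  case (Suc s)
  have pred: "origin \<omega> s (i - 1) \<le> origin \<omega> s i" for i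
    using Suc.IH[of "i - 1"] by (cases i) auto
  show ?case using Suc.IH[of i] pred[of i] by auto
qed simp

lemma origin_mono: "i \<le> i' \<Longrightarrow> origin \<omega> s i \<le> origin \<omega> s i'"
  using lift_Suc_mono_le[of "origin \<omega> s", OF origin_le_origin_Suc] by blast

lemma origin_Suc_le: "origin \<omega> (Suc s) i \<le> origin \<omega> s i"
  using origin_mono[of "i - 1" i \<omega> s] by auto

lemma origin_le_origin_Suc_Suc: "origin \<omega> s i \<le> origin \<omega> (Suc s) (Suc i)"
  using origin_le_origin_Suc[of \<omega> s i] by auto

lemma origin_cong:
  "(\<And>s i. s < S \<Longrightarrow> 1 \<le> i \<Longrightarrow> i \<le> s \<Longrightarrow> \<omega> s i = \<omega>' s i) \<Longrightarrow> origin \<omega> S i = origin \<omega>' S i"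
proof (induction S arbitrary: i)
  case (Suc S)
  have "origin \<omega> S j = origin \<omega>' S j" for j
    by (rule Suc.IH) (use Suc.prems in auto)
  moreover have "(1 \<le> i \<and> i \<le> S \<and> \<omega> S i) \<longleftrightarrow> (1 \<le> i \<and> i \<le> S \<and> \<omega>' S i)"
    using Suc.prems[of S i] by auto
  ultimately show ?case by (simp del: origin.simps add: origin.simps(2))
qed simp

lemma coupled_run_eq_created_value:
  "i \<le> s \<Longrightarrow> enat i \<le> n \<Longrightarrow> coupled_run n \<omega> s i = created_value \<omega> (origin \<omega> s i)"
proof (induction s arbitrary: i)
  case 0
  then show ?case by (simp add: init_conf_def created_value_def)
next
  case (Suc s)
  consider "i = 0" | "1 \<le> i" "i \<le> s" | "i = Suc s"
    using Suc.prems by linarith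
  then show ?case
  proof cases
    case 1
    then show ?thesis using origin_le[of \<omega> "Suc s" 0] by (simp add: coupled_step_def created_value_def)
  next
    case 2
    then show ?thesis using Suc enat_diff_le[of i n 1] by (auto simp: coupled_step_def)
  next
    case 3
    have "coupled_run n \<omega> s s = created_value \<omega> s"
      using Suc.IH[of s] Suc.prems 3 enat_diff_le[of i n 1] origin_eq_self[of s s \<omega>] by simp
    then show ?thesis using 3 Suc.prems origin_eq_self[of "Suc s" "Suc s" \<omega>]
      by (simp add: coupled_step_def created_value_def)
  qed
qed

lemma frontier_coupled_run:
  fixes n \<omega> t
  defines "f \<equiv> coupled_run n \<omega> t"
  shows "frontier n f \<le> t" "enat (frontier n f) \<le> n" "\<And>j. j \<le> frontier n f \<Longrightarrow> f j = Pos"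
proof -
  let ?P = "\<lambda>i. enat i \<le> n \<and> (\<forall>j\<le>i. f j = Pos)"
  have "?P 0" using coupled_run_support[of n \<omega> t] by (auto simp: f_def simp flip: zero_enat_def)
  moreover have bound: "?P i \<Longrightarrow> i \<le> t" for i
    using coupled_run_support[of n \<omega> t] by (auto simp: f_def)
  ultimately have "?P (frontier n f)" unfolding frontier_def
    by (rule GreatestI_nat[where P="?P"]) (use bound in blast)
  then show "frontier n f \<le> t" "enat (frontier n f) \<le> n" "\<And>j. j \<le> frontier n f \<Longrightarrow> f j = Pos"
    using bound by auto
qed

lemma created_value_origin_below_frontier:
  assumes "L \<le> frontier n (coupled_run n \<omega> t)"
  shows "created_value \<omega> (origin \<omega> t L) = Pos"
proof -
  have "L \<le> t" "enat L \<le> n"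
    using frontier_coupled_run(1,2)[of n \<omega> t] assms by (auto intro: order_trans simp flip: enat_ord_simps(1))
  then show ?thesis
    using frontier_coupled_run(3)[OF assms] coupled_run_eq_created_value by metis
qed

text \<open>The leftmost vertex whose origin is at least \<open>J\<close>, after round \<open>J + k\<close>.\<close>
fun tracker :: "(nat \<Rightarrow> nat \<Rightarrow> bool) \<Rightarrow> nat \<Rightarrow> nat \<Rightarrow> nat" where
  "tracker \<omega> J 0 = J"
| "tracker \<omega> J (Suc k) = tracker \<omega> J k + (if \<omega> (J + k) (tracker \<omega> J k) then 1 else 0)"

lemma tracker_le: "tracker \<omega> J k \<le> J + k"
  by (induction k) auto

lemma tracker_cong:
  "(\<And>s i. J \<le> s \<Longrightarrow> s < J + k \<Longrightarrow> i \<le> s \<Longrightarrow> \<omega> s i = \<omega>' s i) \<Longrightarrow> tracker \<omega> J k = tracker \<omega>' J k"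
proof (induction k)
  case (Suc k)
  have "tracker \<omega> J k = tracker \<omega>' J k" by (rule Suc.IH) (use Suc.prems in auto)
  moreover have "\<omega> (J + k) (tracker \<omega> J k) = \<omega>' (J + k) (tracker \<omega> J k)"
    using Suc.prems[of "J + k" "tracker \<omega> J k"] tracker_le[of \<omega> J k] by auto
  ultimately show ?case by simp
qed simp

lemma tracker_origin:
  assumes "1 \<le> J"
  shows "J \<le> tracker \<omega> J k \<and> J \<le> origin \<omega> (J + k) (tracker \<omega> J k)
         \<and> origin \<omega> (J + k) (tracker \<omega> J k - 1) < J"
proof (induction k)
  case 0
  then show ?case using assms origin_eq_self[of J J \<omega>] origin_le[of \<omega> J "J - 1"] by auto
next
  case (Suc k)
  define L where "L = tracker \<omega> J k"
  have IH: "J \<le> L" "J \<le> origin \<omega> (J + k) L" "origin \<omega> (J + k) (L - 1) < J"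
    using Suc tracker_le[of \<omega> J k] unfolding L_def by auto
  have "L \<le> J + k" using tracker_le[of \<omega> J k] unfolding L_def .
  show ?case
  proof (cases "\<omega> (J + k) L")
    case False
    then show ?thesis using IH assms origin_Suc_le[of \<omega> "J + k" "L - 1"] by (simp add: L_def)
  next
    case True
    then show ?thesis using IH assms \<open>L \<le> J + k\<close> origin_le_origin_Suc_Suc[of \<omega> "J + k" L]
      by (simp add: L_def)
  qed
qed

lemma origin_tracker_less:
  assumes "1 \<le> J" "J \<le> J'" "J' \<le> t" and less: "tracker \<omega> J (t - J) < tracker \<omega> J' (t - J')"
  shows "origin \<omega> t (tracker \<omega> J (t - J)) < origin \<omega> t (tracker \<omega> J' (t - J'))"
proof -
  have J: "J + (t - J) = t" "J' + (t - J') = t" using assms by auto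
  have "origin \<omega> t (tracker \<omega> J (t - J)) \<le> origin \<omega> t (tracker \<omega> J' (t - J') - 1)"
    using less by (intro origin_mono) simp
  also have "\<dots> < J'" using tracker_origin[of J' \<omega> "t - J'"] assms J by simp
  also have "\<dots> \<le> origin \<omega> t (tracker \<omega> J' (t - J'))" using tracker_origin[of J' \<omega> "t - J'"] assms J by simp
  finally show ?thesis .
qed

definition round_coins :: "real \<Rightarrow> real \<Rightarrow> nat \<Rightarrow> (nat \<Rightarrow> bool) pmf" where
  "round_coins a b s = Pi_pmf {1..Suc s} False (\<lambda>i. if i \<le> s then bernoulli_pmf b else bernoulli_pmf a)"

definition coin_pmf :: "real \<Rightarrow> real \<Rightarrow> nat \<Rightarrow> (nat \<Rightarrow> nat \<Rightarrow> bool) pmf" where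
  "coin_pmf a b t = Pi_pmf {..<t} (\<lambda>_. False) (round_coins a b)"

lemma spread_step_eq_coupled_step:
  assumes support: "\<And>i. f i \<noteq> Bot \<longleftrightarrow> i \<le> s \<and> enat i \<le> n"
  shows "spread_step a b n f = map_pmf (coupled_step n s f) (round_coins a b s)"
proof -
  let ?A = "{i \<in> {1..Suc s}. enat i \<le> n}"
  define p where "p = (\<lambda>i::nat. if i \<le> s then bernoulli_pmf b else bernoulli_pmf a)"
  define h where "h = (\<lambda>i c. if i \<le> s then (if c then f (i - 1) else f i)
                          else (if c then flip (f s) else f s))"
  have active: "active n f = ?A"
    using support enat_diff_le[of _ n 1] unfolding active_def by (auto simp: Suc_le_eq)
  have local_step: "local_step a b (f i) (f (i - 1)) = map_pmf (h i) (p i)" if "i \<in> ?A" for i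
  proof (cases "i \<le> s")
    case True
    then show ?thesis using support that by (auto simp: local_step_def h_def p_def intro!: map_pmf_cong)
  next
    case False
    then have "i = Suc s" using that by auto
    then show ?thesis using support that enat_diff_le[of i n 1] by (simp add: local_step_def h_def p_def)
  qed
  have "Pi_pmf (active n f) Bot (\<lambda>i. local_step a b (f i) (f (i - 1)))
        = Pi_pmf ?A Bot (\<lambda>i. map_pmf (h i) (p i))"
    unfolding active by (rule Pi_pmf_cong) (use local_step in auto)
  also have "\<dots> = map_pmf (\<lambda>g x. if x \<in> ?A then h x (g x) else Bot) (Pi_pmf ?A False p)"
    by (rule Pi_pmf_map_indexed) simp
  also have "Pi_pmf ?A False p = map_pmf (\<lambda>g x. if x \<in> ?A then g x else False) (round_coins a b s)"
    unfolding round_coins_def p_def[symmetric] by (rule Pi_pmf_subset) auto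
  also have "map_pmf (\<lambda>g x. if x \<in> ?A then h x (g x) else Bot)
      (map_pmf (\<lambda>g x. if x \<in> ?A then g x else False) (round_coins a b s))
      = map_pmf (\<lambda>g x. if x \<in> ?A then h x (g x) else Bot) (round_coins a b s)"
    unfolding pmf.map_comp o_def by (intro map_pmf_cong refl) (auto simp: fun_eq_iff)
  finally have "spread_step a b n f = map_pmf (\<lambda>g. (\<lambda>x. if x \<in> ?A then h x (g x) else Bot)(0 := Pos))
      (round_coins a b s)"
    unfolding spread_step_def by (simp add: pmf.map_comp o_def)
  also have "\<dots> = map_pmf (coupled_step n s f) (round_coins a b s)"
    by (intro map_pmf_cong refl) (auto simp: fun_eq_iff coupled_step_def h_def)
  finally show ?thesis .
qed

lemma spread_path_eq_coupled_run:
  "spread_path a b n t = map_pmf (\<lambda>\<omega>. coupled_run n \<omega> t) (coin_pmf a b t)"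
proof (induction t)
  case 0
  then show ?case by (simp add: coin_pmf_def)
next
  case (Suc t)
  have run_upd: "coupled_run n (w(t := c)) t = coupled_run n w t" for w c
    by (rule coupled_run_cong) auto
  have "spread_path a b n (Suc t)
      = bind_pmf (coin_pmf a b t) (\<lambda>\<omega>. spread_step a b n (coupled_run n \<omega> t))"
    by (simp add: Suc map_pmf_def bind_assoc_pmf bind_return_pmf)
  also have "\<dots> = bind_pmf (coin_pmf a b t)
      (\<lambda>\<omega>. map_pmf (coupled_step n t (coupled_run n \<omega> t)) (round_coins a b t))"
    using coupled_run_support by (simp add: spread_step_eq_coupled_step)
  also have "\<dots> = map_pmf (\<lambda>(c, w). coupled_run n (w(t := c)) (Suc t))
      (pair_pmf (round_coins a b t) (coin_pmf a b t))"
    unfolding pair_pmf_def map_bind_pmf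
    by (subst bind_commute_pmf) (simp add: run_upd map_pmf_def bind_assoc_pmf bind_return_pmf)
  also have "\<dots> = map_pmf (\<lambda>\<omega>. coupled_run n \<omega> (Suc t)) (coin_pmf a b (Suc t))"
    unfolding coin_pmf_def lessThan_Suc
    by (subst Pi_pmf_insert) (auto simp: pmf.map_comp o_def case_prod_unfold)
  finally show ?case .
qed

lemma frontier_in_spread_path:
  "f \<in> set_pmf (spread_path a b n t) \<Longrightarrow> frontier n f \<le> t \<and> enat (frontier n f) \<le> n"
  using frontier_coupled_run by (auto simp: spread_path_eq_coupled_run)

lemma prob_frontier_le_eq_1:
  assumes "real t \<le> x"
  shows "measure_pmf.prob (spread_path a b n t) {f. real (frontier n f) \<le> x \<and> enat (frontier n f) \<le> n} = 1"
  using assms frontier_in_spread_path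
  by (subst measure_pmf.prob_eq_1) (auto simp: AE_measure_pmf_iff intro: order.trans[rotated])

lemma prob_frontier_le_ge:
  assumes "y \<le> x"
  shows "1 - measure_pmf.prob (spread_path a b n t) {f. y \<le> real (frontier n f)}
         \<le> measure_pmf.prob (spread_path a b n t) {f. real (frontier n f) \<le> x \<and> enat (frontier n f) \<le> n}"
proof -
  let ?M = "spread_path a b n t" and ?Beyond = "{f. y \<le> real (frontier n f)}"
  have "1 - measure_pmf.prob ?M ?Beyond = measure_pmf.prob ?M ((UNIV - ?Beyond) \<inter> set_pmf ?M)"
    using measure_pmf.prob_compl[of ?Beyond ?M] by (simp add: measure_Int_set_pmf)
  also have "\<dots> \<le> measure_pmf.prob ?M {f. real (frontier n f) \<le> x \<and> enat (frontier n f) \<le> n}"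
    using frontier_in_spread_path assms by (intro measure_pmf.finite_measure_mono) auto
  finally show ?thesis .
qed

section \<open>Concentration of the trackers\<close>

lemma tracker_distribution:
  assumes J: "1 \<le> J" and b: "b \<in> {0..1}" and A: "finite A" "{J..<J+k} \<subseteq> A"
  shows "map_pmf (\<lambda>w. tracker w J k) (Pi_pmf A (\<lambda>_. False) (round_coins a b))
         = map_pmf ((+) J) (binomial_pmf k b)"
  using A
proof (induction k arbitrary: A)
  case 0
  then show ?case using b by (simp add: binomial_pmf_0)
next
  case (Suc k)
  define m where "m = J + k"
  define P where "P = Pi_pmf (A - {m}) (\<lambda>_. False) (round_coins a b)"
  have A': "A = insert m (A - {m})" using Suc.prems by (auto simp: m_def)
  have IH: "map_pmf (\<lambda>w. tracker w J k) P = map_pmf ((+) J) (binomial_pmf k b)"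
    unfolding P_def using Suc.prems by (intro Suc.IH) (auto simp: m_def)
  have tracker_upd: "tracker (w(m := c)) J (Suc k) = tracker w J k + (if c (tracker w J k) then 1 else 0)"
    for w c
  proof -
    have "tracker (w(m := c)) J k = tracker w J k" by (rule tracker_cong) (auto simp: m_def)
    then show ?thesis by (simp add: m_def)
  qed
  have copy_coin: "map_pmf (\<lambda>c. c (tracker w J k)) (round_coins a b m) = bernoulli_pmf b" for w
  proof -
    have "1 \<le> tracker w J k" "tracker w J k \<le> m"
      using tracker_origin[OF J, of w k] tracker_le[of w J k] J by (auto simp: m_def)
    then show ?thesis unfolding round_coins_def by (subst Pi_pmf_component) auto
  qed
  have "map_pmf (\<lambda>w. tracker w J (Suc k)) (Pi_pmf A (\<lambda>_. False) (round_coins a b))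
      = map_pmf (\<lambda>(c, w). tracker w J k + (if c (tracker w J k) then 1 else 0))
          (pair_pmf (round_coins a b m) P)"
    unfolding P_def using Suc.prems
    by (subst A', subst Pi_pmf_insert)
       (auto simp del: tracker.simps simp add: pmf.map_comp o_def case_prod_unfold tracker_upd)
  also have "\<dots> = bind_pmf P (\<lambda>w. map_pmf (\<lambda>c. tracker w J k + (if c then 1 else 0))
                    (map_pmf (\<lambda>c. c (tracker w J k)) (round_coins a b m)))"
    unfolding pair_pmf_def map_bind_pmf
    by (subst bind_commute_pmf) (simp add: map_pmf_def bind_assoc_pmf bind_return_pmf)
  also have "\<dots> = bind_pmf (map_pmf (\<lambda>w. tracker w J k) P)
                    (\<lambda>v. map_pmf (\<lambda>c. v + (if c then 1 else 0)) (bernoulli_pmf b))"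
    by (simp add: copy_coin bind_map_pmf)
  also have "\<dots> = map_pmf ((+) J) (binomial_pmf (Suc k) b)"
    unfolding IH binomial_pmf_Suc[OF b]
    by (subst bind_commute_pmf) (simp add: bind_map_pmf map_pmf_def bind_assoc_pmf bind_return_pmf add_ac)
  finally show ?case .
qed

lemma prob_tracker_deviation_le:
  assumes J: "1 \<le> J" "J < t" and b: "b \<in> {0..1}" and \<delta>: "0 \<le> \<delta>"
  shows "measure_pmf.prob (coin_pmf a b t)
           {w. \<delta> \<le> \<bar>real (tracker w J (t - J)) - real J - real (t - J) * b\<bar>}
         \<le> 2 * exp (-2 * \<delta>\<^sup>2 / real (t - J))"
proof -
  interpret binomial_distribution "t - J" b by unfold_locales (use b in auto)
  have "measure_pmf.prob (coin_pmf a b t)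
           {w. \<delta> \<le> \<bar>real (tracker w J (t - J)) - real J - real (t - J) * b\<bar>}
      = measure_pmf.prob (map_pmf (\<lambda>w. tracker w J (t - J)) (coin_pmf a b t))
           {x. \<delta> \<le> \<bar>real x - real J - real (t - J) * b\<bar>}"
    by simp
  also have "map_pmf (\<lambda>w. tracker w J (t - J)) (coin_pmf a b t) = map_pmf ((+) J) (binomial_pmf (t - J) b)"
    unfolding coin_pmf_def by (rule tracker_distribution) (use J b in auto)
  also have "measure_pmf.prob \<dots> {x. \<delta> \<le> \<bar>real x - real J - real (t - J) * b\<bar>}
      = measure_pmf.prob (binomial_pmf (t - J) b) {x. \<delta> \<le> \<bar>real x - real (t - J) * b\<bar>}"
    by simp
  finally show ?thesis using prob_abs_ge[of \<delta>] J \<delta> by simp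
qed

section \<open>Independence of creation values from the copy coins\<close>

definition copy_coins :: "real \<Rightarrow> nat \<Rightarrow> (nat \<Rightarrow> bool) pmf" where
  "copy_coins b s = Pi_pmf {1..s} False (\<lambda>_. bernoulli_pmf b)"

definition copy_coin_pmf :: "real \<Rightarrow> nat \<Rightarrow> (nat \<Rightarrow> nat \<Rightarrow> bool) pmf" where
  "copy_coin_pmf b t = Pi_pmf {..<t} (\<lambda>_. False) (copy_coins b)"

definition flip_coin_pmf :: "real \<Rightarrow> nat \<Rightarrow> (nat \<Rightarrow> bool) pmf" where
  "flip_coin_pmf a t = Pi_pmf {..<t} False (\<lambda>_. bernoulli_pmf a)"

definition merge_coins :: "nat \<Rightarrow> (nat \<Rightarrow> bool) \<times> (nat \<Rightarrow> nat \<Rightarrow> bool) \<Rightarrow> nat \<Rightarrow> nat \<Rightarrow> bool" where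
  "merge_coins t = (\<lambda>(F, C) s. if s < t then (C s)(Suc s := F s) else (\<lambda>_. False))"

lemma round_coins_split:
  "round_coins a b s = map_pmf (\<lambda>(d, c). c(Suc s := d)) (pair_pmf (bernoulli_pmf a) (copy_coins b s))"
proof -
  have "round_coins a b s = Pi_pmf (insert (Suc s) {1..s}) False
          (\<lambda>i. if i \<le> s then bernoulli_pmf b else bernoulli_pmf a)"
    unfolding round_coins_def by (simp add: atLeastAtMostSuc_conv)
  also have "\<dots> = map_pmf (\<lambda>(d, c). c(Suc s := d)) (pair_pmf (bernoulli_pmf a)
       (Pi_pmf {1..s} False (\<lambda>i. if i \<le> s then bernoulli_pmf b else bernoulli_pmf a)))"
    by (subst Pi_pmf_insert) auto
  also have "Pi_pmf {1..s} False (\<lambda>i. if i \<le> s then bernoulli_pmf b else bernoulli_pmf a) = copy_coins b s"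
    unfolding copy_coins_def by (rule Pi_pmf_cong) auto
  finally show ?thesis .
qed

lemma coin_pmf_split: "coin_pmf a b t = map_pmf (merge_coins t) (pair_pmf (flip_coin_pmf a t) (copy_coin_pmf b t))"
proof -
  let ?merge = "\<lambda>s (d, c). c(Suc s := d)"
  have "coin_pmf a b t = Pi_pmf {..<t} (\<lambda>_. False)
          (\<lambda>s. map_pmf (?merge s) (pair_pmf (bernoulli_pmf a) (copy_coins b s)))"
    unfolding coin_pmf_def by (rule Pi_pmf_cong) (auto simp: round_coins_split)
  also have "\<dots> = map_pmf (\<lambda>h s. if s \<in> {..<t} then ?merge s (h s) else (\<lambda>_. False))
        (Pi_pmf {..<t} (False, \<lambda>_. False) (\<lambda>s. pair_pmf (bernoulli_pmf a) (copy_coins b s)))"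
    by (rule Pi_pmf_map_indexed) simp
  also have "Pi_pmf {..<t} (False, \<lambda>_. False) (\<lambda>s. pair_pmf (bernoulli_pmf a) (copy_coins b s))
      = map_pmf (\<lambda>(f, g) x. (f x, g x)) (pair_pmf (flip_coin_pmf a t) (copy_coin_pmf b t))"
    unfolding flip_coin_pmf_def copy_coin_pmf_def by (rule Pi_pmf_pair_pmf) simp
  also have "map_pmf (\<lambda>h s. if s \<in> {..<t} then ?merge s (h s) else (\<lambda>_. False))
      (map_pmf (\<lambda>(f, g) x. (f x, g x)) (pair_pmf (flip_coin_pmf a t) (copy_coin_pmf b t)))
      = map_pmf (merge_coins t) (pair_pmf (flip_coin_pmf a t) (copy_coin_pmf b t))"
    unfolding pmf.map_comp by (intro map_pmf_cong refl) (auto simp: merge_coins_def fun_eq_iff)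
  finally show ?thesis .
qed

lemma origin_merge_coins: "origin (merge_coins t (F, C)) t i = origin C t i"
  by (rule origin_cong) (auto simp: merge_coins_def)

lemma tracker_merge_coins: "tracker (merge_coins t (F, C)) J (t - J) = tracker C J (t - J)"
  by (rule tracker_cong) (auto simp: merge_coins_def)

lemma created_value_merge_coins: "j \<le> t \<Longrightarrow> created_value (merge_coins t (F, C)) j = flip_chain F j"
  unfolding created_value_def by (rule flip_chain_cong) (auto simp: merge_coins_def)

lemma flip_coin_pmf_Suc:
  "flip_coin_pmf a (Suc t) = map_pmf (\<lambda>(y, F). F(t := y)) (pair_pmf (bernoulli_pmf a) (flip_coin_pmf a t))"
  unfolding flip_coin_pmf_def lessThan_Suc by (subst Pi_pmf_insert) auto

lemma flip_chain_upd_Pos: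
  assumes "S \<subseteq> {1..Suc t}" "Suc t \<in> S" and Pos: "\<forall>j\<in>S. flip_chain (F(t := y)) j = Pos"
  shows "\<forall>j\<in>S - {Suc t}. flip_chain F j = Pos" "flip_chain F t = (if y then Neg else Pos)"
proof -
  have upd: "flip_chain (F(t := y)) j = flip_chain F j" if "j \<le> t" for j
    by (rule flip_chain_cong) (use that in auto)
  show "\<forall>j\<in>S - {Suc t}. flip_chain F j = Pos"
  proof
    fix j assume j: "j \<in> S - {Suc t}"
    then have "j \<le> t" using assms(1) by auto
    then show "flip_chain F j = Pos" using Pos j upd by auto
  qed
  show "flip_chain F t = (if y then Neg else Pos)"
    using Pos assms(2) upd[of t] by (cases y) auto
qed

lemma prob_flip_chain_Pos_le:
  assumes a: "0 \<le> a" "a \<le> 1/2"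
  shows "S \<subseteq> {1..t} \<Longrightarrow> measure_pmf.prob (flip_coin_pmf a t) {F. \<forall>j\<in>S. flip_chain F j = Pos} \<le> (1 - a) ^ card S"
proof (induction t arbitrary: S)
  case 0
  then show ?case by simp
next
  case (Suc t)
  let ?M = "pair_pmf (bernoulli_pmf a) (flip_coin_pmf a t)"
  let ?prob = "measure_pmf.prob (flip_coin_pmf a t)"
  define S' where "S' = S - {Suc t}"
  let ?E = "{F. \<forall>j\<in>S'. flip_chain F j = Pos}"
  have S': "S' \<subseteq> {1..t}" using Suc.prems by (auto simp: S'_def)
  show ?case
  proof (cases "Suc t \<in> S")
    case False
    then have "S' = S" by (simp add: S'_def)
    have "flip_chain (F(t := y)) j = flip_chain F j" if "j \<in> S" for F y j
      by (rule flip_chain_cong) (use that S' \<open>S' = S\<close> in auto)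
    then have "(\<lambda>(y, F). F(t := y)) -` {F. \<forall>j\<in>S. flip_chain F j = Pos} = UNIV \<times> ?E"
      using \<open>S' = S\<close> by auto
    then show ?thesis
      using Suc.IH[OF S'] \<open>S' = S\<close> by (simp add: flip_coin_pmf_Suc measure_pair_pmf_Times)
  next
    case True
    have card: "card S = Suc (card S')"
      using card_Suc_Diff1[OF finite_subset[OF Suc.prems finite_atLeastAtMost] True] by (simp add: S'_def)
    let ?N = "?E \<inter> {F. flip_chain F t = Neg}" and ?P = "?E \<inter> {F. flip_chain F t = Pos}"
    have "(y, F) \<in> {True} \<times> ?N \<union> {False} \<times> ?P" if "\<forall>j\<in>S. flip_chain (F(t := y)) j = Pos" for y F
      using flip_chain_upd_Pos[OF Suc.prems True that] by (cases y) (auto simp: S'_def)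
    then have "(\<lambda>(y, F). F(t := y)) -` {F. \<forall>j\<in>S. flip_chain F j = Pos} \<subseteq> {True} \<times> ?N \<union> {False} \<times> ?P"
      by auto
    then have "measure_pmf.prob (flip_coin_pmf a (Suc t)) {F. \<forall>j\<in>S. flip_chain F j = Pos}
        \<le> measure_pmf.prob ?M ({True} \<times> ?N \<union> {False} \<times> ?P)"
      unfolding flip_coin_pmf_Suc by (simp add: measure_pmf.finite_measure_mono)
    also have "\<dots> = a * ?prob ?N + (1 - a) * ?prob ?P"
      using a by (subst measure_pmf.finite_measure_Union)
        (auto simp: measure_pair_pmf_Times measure_pmf_single)
    also have "\<dots> \<le> (1 - a) * (?prob ?N + ?prob ?P)"
      using a mult_right_mono[of a "1 - a" "?prob ?N"] by (simp add: algebra_simps)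
    also have "?prob ?N + ?prob ?P = ?prob (?N \<union> ?P)"
      by (subst measure_pmf.finite_measure_Union) auto
    also have "(1 - a) * \<dots> \<le> (1 - a) * ?prob ?E"
      using a by (intro mult_left_mono measure_pmf.finite_measure_mono) auto
    also have "\<dots> \<le> (1 - a) * (1 - a) ^ card S'"
      using a by (intro mult_left_mono Suc.IH S') auto
    finally show ?thesis by (simp add: card)
  qed
qed

lemma prob_created_values_Pos_le:
  assumes a: "0 \<le> a" "a \<le> 1/2"
    and copy_coins_only: "\<And>F C. g (merge_coins t (F, C)) = g C"
  shows "measure_pmf.prob (coin_pmf a b t)
           {w. inj_on (g w) K \<and> g w ` K \<subseteq> {1..t} \<and> (\<forall>k\<in>K. created_value w (g w k) = Pos)}
         \<le> (1 - a) ^ card K"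
proof -
  let ?E = "{w. inj_on (g w) K \<and> g w ` K \<subseteq> {1..t} \<and> (\<forall>k\<in>K. created_value w (g w k) = Pos)}"
  have "measure_pmf.prob (pair_pmf (flip_coin_pmf a t) (copy_coin_pmf b t)) (merge_coins t -` ?E) \<le> (1 - a) ^ card K"
  proof (rule measure_pair_pmf_le)
    fix C
    show "measure_pmf.prob (flip_coin_pmf a t) {F. (F, C) \<in> merge_coins t -` ?E} \<le> (1 - a) ^ card K"
    proof (cases "inj_on (g C) K \<and> g C ` K \<subseteq> {1..t}")
      case False
      then have "{F. (F, C) \<in> merge_coins t -` ?E} = {}" by (auto simp: copy_coins_only)
      then show ?thesis using a by (simp only: measure_empty) simp
    next
      case True
      then have "g C k \<le> t" if "k \<in> K" for k using that by auto
      then have "{F. (F, C) \<in> merge_coins t -` ?E} \<subseteq> {F. \<forall>j\<in>g C ` K. flip_chain F j = Pos}"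
        by (auto simp: copy_coins_only created_value_merge_coins)
      then have "measure_pmf.prob (flip_coin_pmf a t) {F. (F, C) \<in> merge_coins t -` ?E}
          \<le> measure_pmf.prob (flip_coin_pmf a t) {F. \<forall>j\<in>g C ` K. flip_chain F j = Pos}"
        by (rule measure_pmf.finite_measure_mono) simp
      also have "\<dots> \<le> (1 - a) ^ card (g C ` K)"
        using True by (intro prob_flip_chain_Pos_le a) auto
      finally show ?thesis using True by (simp add: card_image)
    qed
  qed (use a in simp)
  then show ?thesis by (simp add: coin_pmf_split)
qed

definition block_tracker :: "nat \<Rightarrow> nat \<Rightarrow> (nat \<Rightarrow> nat \<Rightarrow> bool) \<Rightarrow> nat \<Rightarrow> nat" where
  "block_tracker \<Delta> t w k = tracker w (k * \<Delta>) (t - k * \<Delta>)"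

definition block_origin :: "nat \<Rightarrow> nat \<Rightarrow> (nat \<Rightarrow> nat \<Rightarrow> bool) \<Rightarrow> nat \<Rightarrow> nat" where
  "block_origin \<Delta> t w k = origin w t (block_tracker \<Delta> t w k)"

lemma block_start_bounds:
  fixes k u \<Delta> t :: nat
  shows "k \<in> {1..u} \<Longrightarrow> 1 \<le> \<Delta> \<Longrightarrow> u * \<Delta> < t \<Longrightarrow> 1 \<le> k * \<Delta> \<and> k * \<Delta> < t"
  using order.strict_trans1[OF mult_right_mono[of k u \<Delta>]] by auto

lemma block_tracker_spacing:
  fixes b :: real
  assumes b: "0 \<le> b" "b \<le> 1" and \<Delta>: "1 \<le> \<Delta>" "u * \<Delta> < t"
    and close: "\<And>k. k \<in> {1..u} \<Longrightarrow>
      \<bar>real (block_tracker \<Delta> t w k) - real (k * \<Delta>) - real (t - k * \<Delta>) * b\<bar> < (1 - b) * \<Delta> / 2"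
  shows "\<And>k k'. k \<in> {1..u} \<Longrightarrow> k' \<in> {1..u} \<Longrightarrow> k < k' \<Longrightarrow> block_tracker \<Delta> t w k < block_tracker \<Delta> t w k'"
    and "\<And>k. k \<in> {1..u} \<Longrightarrow> real (block_tracker \<Delta> t w k) < b * t + real ((u + 1) * \<Delta>)"
proof -
  let ?L = "block_tracker \<Delta> t w"
  have near: "\<bar>real (?L k) - (b * t + (1 - b) * k * \<Delta>)\<bar> < (1 - b) * \<Delta> / 2" if "k \<in> {1..u}" for k
    using close[OF that] block_start_bounds[OF that \<Delta>] by (simp add: of_nat_diff algebra_simps)
  show "?L k < ?L k'" if "k \<in> {1..u}" "k' \<in> {1..u}" "k < k'" for k k'
  proof -
    have "(1 - b) * \<Delta> * (k + 1) \<le> (1 - b) * \<Delta> * k'"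
      using that b by (intro mult_left_mono) auto
    then have "(1 - b) * k * \<Delta> + (1 - b) * \<Delta> \<le> (1 - b) * k' * \<Delta>"
      by (simp add: algebra_simps)
    then have "real (?L k) < real (?L k')"
      using near[OF that(1)] near[OF that(2)] unfolding abs_less_iff by linarith
    then show ?thesis by simp
  qed
  show "real (?L k) < b * t + real ((u + 1) * \<Delta>)" if "k \<in> {1..u}" for k
  proof -
    have "(1 - b) * (k * \<Delta> + \<Delta> / 2) \<le> k * \<Delta> + \<Delta> / 2"
      using b by (intro mult_left_le_one_le) auto
    moreover have "real k * \<Delta> \<le> real u * \<Delta>"
      using that by (intro mult_right_mono) auto
    moreover have "(1 - b) * k * \<Delta> + (1 - b) * \<Delta> / 2 = (1 - b) * (k * \<Delta> + \<Delta> / 2)"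
      by (simp add: algebra_simps)
    ultimately have "(1 - b) * k * \<Delta> + (1 - b) * \<Delta> / 2 \<le> (u + 1) * \<Delta>"
      by (simp add: distrib_right)
    then show ?thesis using near[OF that] unfolding abs_less_iff of_nat_mult of_nat_add by linarith
  qed
qed

lemma frontier_beyond_blocks:
  fixes b :: real
  assumes b: "0 \<le> b" "b \<le> 1" and \<Delta>: "1 \<le> \<Delta>" "u * \<Delta> < t"
    and close: "\<And>k. k \<in> {1..u} \<Longrightarrow>
      \<bar>real (block_tracker \<Delta> t w k) - real (k * \<Delta>) - real (t - k * \<Delta>) * b\<bar> < (1 - b) * \<Delta> / 2"
    and beyond: "b * t + real ((u + 1) * \<Delta>) \<le> real (frontier n (coupled_run n w t))"
  shows "strict_mono_on {1..u} (block_origin \<Delta> t w) \<and> block_origin \<Delta> t w ` {1..u} \<subseteq> {1..t}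
    \<and> (\<forall>k\<in>{1..u}. created_value w (block_origin \<Delta> t w k) = Pos)"
proof -
  note block = block_start_bounds[OF _ \<Delta>]
  have less: "block_tracker \<Delta> t w k < block_tracker \<Delta> t w k'" if "k \<in> {1..u}" "k' \<in> {1..u}" "k < k'" for k k'
    using block_tracker_spacing(1)[OF b \<Delta>] close that by blast
  have "strict_mono_on {1..u} (block_origin \<Delta> t w)"
  proof (rule strict_mono_onI)
    fix k k' assume k: "k \<in> {1..u}" "k' \<in> {1..u}" "k < k'"
    show "block_origin \<Delta> t w k < block_origin \<Delta> t w k'"
      unfolding block_origin_def block_tracker_def
      using block[OF k(1)] block[OF k(2)] less[OF k] k(3)
      by (intro origin_tracker_less) (auto simp: block_tracker_def)
  qed
  moreover have "block_origin \<Delta> t w ` {1..u} \<subseteq> {1..t}"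
  proof clarify
    fix k assume k: "k \<in> {1..u}"
    have "k * \<Delta> \<le> block_origin \<Delta> t w k"
      using tracker_origin[of "k * \<Delta>" w "t - k * \<Delta>"] block[OF k]
      by (simp add: block_origin_def block_tracker_def)
    moreover have "block_origin \<Delta> t w k \<le> t"
      using origin_le[of w t] tracker_le[of w "k * \<Delta>" "t - k * \<Delta>"] block[OF k]
      by (simp add: block_origin_def block_tracker_def) (meson le_trans)
    ultimately show "block_origin \<Delta> t w k \<in> {1..t}" using block[OF k] by (simp del: One_nat_def)
  qed
  moreover have "block_tracker \<Delta> t w k \<le> frontier n (coupled_run n w t)" if "k \<in> {1..u}" for k
  proof -
    have "real (block_tracker \<Delta> t w k) < b * t + real ((u + 1) * \<Delta>)"
      using block_tracker_spacing(2)[OF b \<Delta>] close that by blast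
    then show ?thesis using beyond by linarith
  qed
  then have "\<forall>k\<in>{1..u}. created_value w (block_origin \<Delta> t w k) = Pos"
    using created_value_origin_below_frontier unfolding block_origin_def by blast
  ultimately show ?thesis by blast
qed

lemma prob_frontier_beyond_blocks_le:
  fixes a b :: real
  assumes a: "0 \<le> a" "a \<le> 1/2" and b: "0 \<le> b" "b \<le> 1" and \<Delta>: "1 \<le> \<Delta>" "u * \<Delta> < t"
  shows "measure_pmf.prob (spread_path a b n t) {f. b * t + real ((u + 1) * \<Delta>) \<le> real (frontier n f)}
         \<le> u * (2 * exp (- ((1 - b)\<^sup>2 * real \<Delta> ^ 2 / (2 * real t)))) + (1 - a) ^ u"
proof -
  let ?M = "coin_pmf a b t"
  define \<delta> where "\<delta> = (1 - b) * \<Delta> / 2"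
  define Far where "Far = (\<lambda>k. {w. \<delta> \<le> \<bar>real (block_tracker \<Delta> t w k) - real (k * \<Delta>) - real (t - k * \<Delta>) * b\<bar>})"
  define Pos_origins where "Pos_origins = {w. inj_on (block_origin \<Delta> t w) {1..u}
      \<and> block_origin \<Delta> t w ` {1..u} \<subseteq> {1..t} \<and> (\<forall>k\<in>{1..u}. created_value w (block_origin \<Delta> t w k) = Pos)}"
  have "{w. b * t + real ((u + 1) * \<Delta>) \<le> real (frontier n (coupled_run n w t))}
      \<subseteq> (\<Union>k\<in>{1..u}. Far k) \<union> Pos_origins"
    using frontier_beyond_blocks[OF b \<Delta>] strict_mono_on_imp_inj_on
    unfolding Far_def Pos_origins_def \<delta>_def by (force simp: not_le)
  then have "measure_pmf.prob (spread_path a b n t) {f. b * t + real ((u + 1) * \<Delta>) \<le> real (frontier n f)}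
      \<le> measure_pmf.prob ?M ((\<Union>k\<in>{1..u}. Far k) \<union> Pos_origins)"
    by (simp add: spread_path_eq_coupled_run measure_pmf.finite_measure_mono)
  also have "\<dots> \<le> (\<Sum>k\<in>{1..u}. measure_pmf.prob ?M (Far k)) + measure_pmf.prob ?M Pos_origins"
    by (intro order.trans[OF measure_Un_le] add_mono
        measure_pmf.finite_measure_subadditive_finite) auto
  also have "\<dots> \<le> (\<Sum>k\<in>{1..u}. 2 * exp (-2 * \<delta>\<^sup>2 / t)) + (1 - a) ^ u"
  proof (intro add_mono sum_mono)
    fix k assume k: "k \<in> {1..u}"
    have block: "1 \<le> k * \<Delta>" "k * \<Delta> < t"
      using block_start_bounds[OF k \<Delta>] by auto
    have "measure_pmf.prob ?M (Far k) \<le> 2 * exp (-2 * \<delta>\<^sup>2 / real (t - k * \<Delta>))"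
      unfolding Far_def block_tracker_def using b block
      by (intro prob_tracker_deviation_le) (auto simp: \<delta>_def)
    also have "\<dots> \<le> 2 * exp (-2 * \<delta>\<^sup>2 / t)"
    proof -
      have "\<delta>\<^sup>2 / t \<le> \<delta>\<^sup>2 / real (t - k * \<Delta>)"
        using block by (intro divide_left_mono) (auto simp del: of_nat_diff)
      then show ?thesis by simp
    qed
    finally show "measure_pmf.prob ?M (Far k) \<le> 2 * exp (-2 * \<delta>\<^sup>2 / t)" .
  next
    have "measure_pmf.prob ?M Pos_origins \<le> (1 - a) ^ card {1..u}"
      unfolding Pos_origins_def using a
      by (intro prob_created_values_Pos_le)
        (simp_all add: fun_eq_iff block_origin_def block_tracker_def origin_merge_coins tracker_merge_coins)
    then show "measure_pmf.prob ?M Pos_origins \<le> (1 - a) ^ u" by simp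
  qed
  also have "(\<Sum>k\<in>{1..u}. 2 * exp (-2 * \<delta>\<^sup>2 / t)) = u * (2 * exp (- ((1 - b)\<^sup>2 * real \<Delta> ^ 2 / (2 * real t))))"
    by (simp add: \<delta>_def power_mult_distrib power_divide)
  finally show ?thesis .
qed

section \<open>Choice of parameters\<close>

lemma exp_tail_sum_le:
  fixes \<mu> c l :: real and u :: nat
  assumes \<mu>: "0 < \<mu>" "\<mu> \<le> c" "\<mu> \<le> l" and u: "1 \<le> u" "24 / \<mu>\<^sup>2 \<le> u"
  shows "u * (2 * exp (- (c * u ^ 2))) + exp (- (l * u)) \<le> exp (- (\<mu> / 4 * (u + 1)))"
proof -
  have "\<mu> * u \<le> c * u" using \<mu> u by (intro mult_right_mono) auto
  also have "\<dots> \<le> c * u ^ 2" using \<mu> u by (intro mult_left_mono) (auto simp: power2_eq_square)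
  finally have "exp (- (c * u ^ 2)) \<le> exp (- (\<mu> * u))" by simp
  then have "u * (2 * exp (- (c * u ^ 2))) \<le> u * (2 * exp (- (\<mu> * u)))"
    by (intro mult_left_mono) auto
  moreover have "exp (- (l * u)) \<le> exp (- (\<mu> * u))" using \<mu> u by (simp add: mult_right_mono)
  ultimately have "u * (2 * exp (- (c * u ^ 2))) + exp (- (l * u)) \<le> u * (2 * exp (- (\<mu> * u))) + exp (- (\<mu> * u))"
    by linarith
  also have "\<dots> = (2 * real u + 1) * exp (- (\<mu> * u))" by (simp add: algebra_simps)
  also have "2 * real u + 1 \<le> exp (\<mu> * u / 2)"
  proof -
    have "24 \<le> \<mu>\<^sup>2 * u" using u(2) \<mu> by (simp add: field_simps)
    then have "24 * real u \<le> \<mu>\<^sup>2 * u * u" by (intro mult_right_mono) auto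
    moreover have "(\<mu> * u / 2)\<^sup>2 / 2 = \<mu>\<^sup>2 * u * u / 8" by (simp add: power2_eq_square)
    moreover have "0 \<le> \<mu> * u / 2" using \<mu> by simp
    ultimately have "2 * real u + 1 \<le> 1 + \<mu> * u / 2 + (\<mu> * u / 2)\<^sup>2 / 2" by linarith
    also have "\<dots> \<le> exp (\<mu> * u / 2)" by (rule exp_lower_Taylor_quadratic) (use \<mu> in simp)
    finally show ?thesis .
  qed
  then have "(2 * real u + 1) * exp (- (\<mu> * u)) \<le> exp (\<mu> * u / 2) * exp (- (\<mu> * u))"
    by (intro mult_right_mono) auto
  also have "\<dots> = exp (- (\<mu> * u / 2))" by (simp flip: exp_add)
  also have "\<dots> \<le> exp (- (\<mu> / 4 * (u + 1)))" using \<mu> u by (simp add: algebra_simps)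
  finally show ?thesis .
qed

lemma block_tail_le_exp:
  fixes a b \<mu> :: real and u t :: nat
  assumes a: "a < 1" and \<mu>: "0 < \<mu>" "\<mu> \<le> (1 - b)\<^sup>2 / 512" "\<mu> \<le> - ln (1 - a)"
    and u: "1 \<le> u" "24 / \<mu>\<^sup>2 \<le> u" and t: "0 < t" "real t < (real u + 1) ^ 8"
  shows "u * (2 * exp (- ((1 - b)\<^sup>2 * real (u ^ 5) ^ 2 / (2 * real t)))) + (1 - a) ^ u
         \<le> exp (- (\<mu> / 4 * (u + 1)))"
proof -
  have "(real u + 1) ^ 8 \<le> (2 * real u) ^ 8" using u by (intro power_mono) auto
  then have "real t \<le> 256 * real u ^ 8" using t by (simp add: power_mult_distrib)
  have "(1 - b)\<^sup>2 / 512 * u ^ 2 = (1 - b)\<^sup>2 * real u ^ 10 / (2 * (256 * real u ^ 8))"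
    using u by (simp add: field_simps flip: power_add)
  also have "\<dots> \<le> (1 - b)\<^sup>2 * real u ^ 10 / (2 * real t)"
    using \<open>real t \<le> 256 * real u ^ 8\<close> t u by (intro divide_left_mono) auto
  also have "real u ^ 10 = real (u ^ 5) ^ 2"
    by (simp flip: power_mult)
  finally have "(1 - b)\<^sup>2 / 512 * u ^ 2 \<le> (1 - b)\<^sup>2 * real (u ^ 5) ^ 2 / (2 * real t)" .
  then have "exp (- ((1 - b)\<^sup>2 * real (u ^ 5) ^ 2 / (2 * real t))) \<le> exp (- ((1 - b)\<^sup>2 / 512 * u ^ 2))"
    by simp
  moreover have "(1 - a) ^ u = exp (real u * ln (1 - a))"
    using a by (simp add: exp_of_nat_mult)
  then have "(1 - a) ^ u = exp (- (- ln (1 - a) * u))"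
    by (simp add: mult.commute)
  ultimately have "u * (2 * exp (- ((1 - b)\<^sup>2 * real (u ^ 5) ^ 2 / (2 * real t)))) + (1 - a) ^ u
      \<le> u * (2 * exp (- ((1 - b)\<^sup>2 / 512 * u ^ 2))) + exp (- (- ln (1 - a) * u))"
    by (simp add: mult_left_mono)
  also have "\<dots> \<le> exp (- (\<mu> / 4 * (u + 1)))"
    by (rule exp_tail_sum_le[OF \<mu> u])
  finally show ?thesis .
qed

lemma prob_frontier_le_powr:
  fixes a b \<mu> K :: real and U t :: nat
  assumes a: "0 < a" "a \<le> 1/2" and b: "0 \<le> b" "b \<le> 1"
    and \<mu>: "0 < \<mu>" "\<mu> \<le> (1 - b)\<^sup>2 / 512" "\<mu> \<le> - ln (1 - a)"
    and U: "2 \<le> U" "24 / \<mu>\<^sup>2 \<le> U" and K: "real U ^ 2 + 2 \<le> K" and t: "1 \<le> t"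
  shows "1 - exp (- (\<mu> / 4) * t powr (1/8)) \<le> measure_pmf.prob (spread_path a b n t)
           {f. real (frontier n f) \<le> b * t + K * t powr (3/4) \<and> enat (frontier n f) \<le> n}"
proof -
  define r where "r = t powr (1/8)"
  define u where "u = nat \<lfloor>r\<rfloor>"
  have r: "1 \<le> r" "r ^ 2 = t powr (1/4)" "r ^ 6 = t powr (3/4)" "r ^ 8 = t"
    using t by (simp_all add: r_def ge_one_powr_ge_zero powr_powr flip: powr_realpow)
  have ur: "real u \<le> r" "r < u + 1" "1 \<le> u" unfolding u_def using r(1) by linarith+
  show ?thesis
  proof (cases "u < U")
    case True
    have "t powr (1/4) \<le> real U ^ 2"
      using r(2) ur True power_mono[of r "real U" 2] by simp
    then have "t powr (1/4) * t powr (3/4) \<le> K * t powr (3/4)"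
      using K by (intro mult_right_mono) auto
    then have "real t \<le> b * t + K * t powr (3/4)"
      using b t by (simp add: add_increasing flip: powr_add)
    then show ?thesis by (simp add: prob_frontier_le_eq_1)
  next
    case False
    have "real u ^ 8 \<le> t" using ur r(4) power_mono[of "real u" r 8] by simp
    moreover have "real u ^ 6 < real u ^ 8" using False U by (simp add: power_strict_increasing)
    ultimately have ut: "u * u ^ 5 < t" by (simp flip: of_nat_power of_nat_mult power_Suc)
    have "real u ^ 5 \<le> real u ^ 6" using ur by (intro power_increasing) auto
    moreover have "real u ^ 6 \<le> r ^ 6" using ur by (intro power_mono) auto
    moreover have "(u + 1) * real u ^ 5 = real u ^ 6 + real u ^ 5" by (simp add: algebra_simps power_eq_if)
    ultimately have "(u + 1) * real u ^ 5 \<le> 2 * r ^ 6" by linarith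
    also have "\<dots> \<le> K * t powr (3/4)"
      unfolding r(3) using K zero_le_power2[of "real U"] by (intro mult_right_mono) (linarith, simp)
    finally have "b * t + real ((u + 1) * u ^ 5) \<le> b * t + K * t powr (3/4)" by (simp add: algebra_simps)
    then have "1 - measure_pmf.prob (spread_path a b n t) {f. b * t + real ((u + 1) * u ^ 5) \<le> real (frontier n f)}
        \<le> measure_pmf.prob (spread_path a b n t)
             {f. real (frontier n f) \<le> b * t + K * t powr (3/4) \<and> enat (frontier n f) \<le> n}"
      by (rule prob_frontier_le_ge)
    moreover have "measure_pmf.prob (spread_path a b n t) {f. b * t + real ((u + 1) * u ^ 5) \<le> real (frontier n f)}
        \<le> u * (2 * exp (- ((1 - b)\<^sup>2 * real (u ^ 5) ^ 2 / (2 * real t)))) + (1 - a) ^ u"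
      using a b ut ur by (intro prob_frontier_beyond_blocks_le) auto
    moreover have "\<dots> \<le> exp (- (\<mu> / 4 * (u + 1)))"
      using a \<mu> ur U False r t power_strict_mono[of r "real u + 1" 8]
      by (intro block_tail_le_exp) auto
    moreover have "\<dots> \<le> exp (- (\<mu> / 4) * t powr (1/8))"
      using ur \<mu> by (simp add: r_def)
    ultimately show ?thesis by linarith
  qed
qed

theorem mainTheorem8:
  fixes a b :: real
  assumes "0 < a" "a < 1/2" "0 < b" "b < 1"
  shows "\<exists>K c1 c2 c3 :: real. K > 0 \<and> c1 > 0 \<and> c2 > 0 \<and> c3 > 0 \<and>
    (\<forall>(n::enat) (t::nat). t \<ge> 1 \<longrightarrow>
      measure_pmf.prob (spread_path a b n t)
        {f. real (frontier n f) \<le> b * real t + K * real t powr (1 - c3)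
            \<and> enat (frontier n f) \<le> n}
      \<ge> 1 - exp (- c1 * real t powr c2))"
proof -
  define \<mu> where "\<mu> = min ((1 - b)\<^sup>2 / 512) (- ln (1 - a))"
  define U where "U = max 2 (nat \<lceil>24 / \<mu>\<^sup>2\<rceil>)"
  define K where "K = real U ^ 2 + 2"
  have "0 < \<mu>" using assms by (simp add: \<mu>_def ln_less_zero)
  moreover have "24 / \<mu>\<^sup>2 \<le> U" unfolding U_def by linarith
  ultimately have "1 - exp (- (\<mu> / 4) * t powr (1/8)) \<le> measure_pmf.prob (spread_path a b n t)
      {f. real (frontier n f) \<le> b * t + K * t powr (1 - 1/4) \<and> enat (frontier n f) \<le> n}"
    if "1 \<le> t" for n t
    using prob_frontier_le_powr[of a b \<mu> U K t n] assms that
    by (simp add: \<mu>_def U_def K_def)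
  moreover have "0 < K" unfolding K_def by (simp add: add_nonneg_pos)
  ultimately show ?thesis
    using \<open>0 < \<mu>\<close> by (intro exI[of _ K] exI[of _ "\<mu> / 4"] exI[of _ "1/8"] exI[of _ "1/4"]) auto
qed

end
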